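(* Let $\mathcal F$ be a family of subsets of an ordinal $\theta$, and suppose there is an ordinal $\alpha\le\theta$ that cannot be written as a countable union of sets orthogonal to $\mathcal F$. Let $\alpha$ be the least such ordinal. Then $\alpha$ has uncountable cofinality.
   Context: A set $B$ is orthogonal to $\mathcal F$ if $B\cap x$ is finite for every $x\in\mathcal F$. An ordinal $\alpha$ is identified with the set of smaller ordinals. *)

theory Defs
  imports Main "HOL-Library.Countable_Set"
begin

text \<open>Ordinals are modelled as elements of a well-ordered type; the ordinal a is
identified with its initial segment {..<a} (the set of smaller ordinals).\<close>

definition orthogonal :: "'a set \<Rightarrow> 'a set set \<Rightarrow> bool" where
  "orthogonal B F \<longleftrightarrow> (\<forall>x\<in>F. finite (B \<inter> x))"

definition countable_union_orthogonal :: "'a set set \<Rightarrow> 'a set \<Rightarrow> bool" where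
  "countable_union_orthogonal F A \<longleftrightarrow>
     (\<exists>\<C>. countable \<C> \<and> (\<forall>B\<in>\<C>. orthogonal B F) \<and> \<Union>\<C> = A)"

definition cofinal_in :: "'a::wellorder set \<Rightarrow> 'a \<Rightarrow> bool" where
  "cofinal_in S a \<longleftrightarrow> S \<subseteq> {..<a} \<and> (\<forall>b<a. \<exists>s\<in>S. b \<le> s)"

definition uncountable_cofinality :: "'a::wellorder \<Rightarrow> bool" where
  "uncountable_cofinality a \<longleftrightarrow> \<not> (\<exists>S. countable S \<and> cofinal_in S a)"

end

theory Submission
  imports Defs
begin

text \<open>If \<alpha> had countable cofinality, a countable cofinal set S would write
{..<\<alpha>} as the countable union of the initial segments {..s}, s \<in> S. Each {..<s}
is a countable union of orthogonal sets by minimality of \<alpha>, and the singleton {s}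
is orthogonal, so {..<\<alpha>} would itself be such a countable union.\<close>

lemma orthogonal_singleton: "orthogonal {s} F"
  unfolding orthogonal_def by simp

lemma countable_union_orthogonal_UN:
  assumes "countable I" and "\<And>i. i \<in> I \<Longrightarrow> countable_union_orthogonal F (A i)"
  shows "countable_union_orthogonal F (\<Union>i\<in>I. A i)"
proof -
  obtain \<C> where \<C>: "\<And>i. i \<in> I \<Longrightarrow>
      countable (\<C> i) \<and> (\<forall>B\<in>\<C> i. orthogonal B F) \<and> \<Union>(\<C> i) = A i"
    using assms(2) unfolding countable_union_orthogonal_def by metis
  have "\<Union>(\<Union>i\<in>I. \<C> i) = (\<Union>i\<in>I. \<Union>(\<C> i))"
    by blast
  also have "\<dots> = (\<Union>i\<in>I. A i)"
    using \<C> by simp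
  finally have "\<Union>(\<Union>i\<in>I. \<C> i) = (\<Union>i\<in>I. A i)" .
  moreover have "countable (\<Union>i\<in>I. \<C> i)"
    using assms(1) \<C> by (intro countable_UN) auto
  moreover have "\<forall>B\<in>(\<Union>i\<in>I. \<C> i). orthogonal B F"
    using \<C> by blast
  ultimately show ?thesis
    unfolding countable_union_orthogonal_def by blast
qed

lemma countable_union_orthogonal_insert:
  assumes "countable_union_orthogonal F A"
  shows "countable_union_orthogonal F (insert s A)"
proof -
  obtain \<C> where "countable \<C>" "\<forall>B\<in>\<C>. orthogonal B F" "\<Union>\<C> = A"
    using assms unfolding countable_union_orthogonal_def by blast
  then show ?thesis
    unfolding countable_union_orthogonal_def
    by (intro exI[of _ "insert {s} \<C>"]) (auto simp: orthogonal_singleton)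
qed

lemma lessThan_eq_UN_atMost_cofinal:
  assumes "cofinal_in S a"
  shows "{..<a} = (\<Union>s\<in>S. {..s})"
  using assms unfolding cofinal_in_def by (auto intro: le_less_trans)

theorem proposition2p1:
  fixes F :: "'a::wellorder set set" and \<theta> \<alpha> :: 'a
  assumes "\<forall>x\<in>F. x \<subseteq> {..<\<theta>}"
    and "\<alpha> \<le> \<theta>"
    and "\<not> countable_union_orthogonal F {..<\<alpha>}"
    and "\<forall>\<beta><\<alpha>. countable_union_orthogonal F {..<\<beta>}"
  shows "uncountable_cofinality \<alpha>"
  unfolding uncountable_cofinality_def
proof
  assume "\<exists>S. countable S \<and> cofinal_in S \<alpha>"
  then obtain S where S: "countable S" "cofinal_in S \<alpha>"
    by blast
  have "countable_union_orthogonal F {..s}" if "s \<in> S" for s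
  proof -
    have "s < \<alpha>"
      using S(2) that unfolding cofinal_in_def by blast
    then have "countable_union_orthogonal F (insert s {..<s})"
      using assms(4) by (intro countable_union_orthogonal_insert) auto
    moreover have "insert s {..<s} = {..s}"
      by auto
    ultimately show ?thesis
      by simp
  qed
  then have "countable_union_orthogonal F {..<\<alpha>}"
    using S lessThan_eq_UN_atMost_cofinal by (metis countable_union_orthogonal_UN)
  with assms(3) show False ..
qed

end
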